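(* Let $\lambda,\mu\in\mathbb{C}$ satisfy one of: (i) $\mu\notin\frac12\mathbb{Z}$; (ii) $\mu\in\frac12+\mathbb{Z}$ and $\lambda\notin\{-3,-1,1\}$; (iii) $\mu\in\mathbb{Z}$ and $\lambda\neq-1$. Let $L=\widetilde{L_{\lambda,\mu}}^1$ and let $\Delta_j(L)$ be the space of $\frac12$-derivations of $L$ of degree $j\in\mathbb{Z}$. If $\lambda\neq1$, then $\Delta_0(L)=\langle\mathrm{Id}\rangle$ and $\Delta_j(L)=0$ for $j\neq0$. If $\lambda=1$ (so we are in case (i) or (iii)), then $\Delta_j(L)$ consists exactly of the maps $c\,\delta_{j,0}\mathrm{Id}+\varphi_{j,\alpha}$ with $c,\alpha\in\mathbb{C}$, where $\varphi_{j,\alpha}(L_n)=\alpha M_{n+j}$ for all $n\in\mathbb{Z}$ and $\varphi_{j,\alpha}$ vanishes on all $M_n$, $Y_{n+\frac12}$ and on $C_L$.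
   Context: For $\lambda,\mu\in\mathbb{C}$, $\widetilde{L_{\lambda,\mu}}^1$ is the complex Lie algebra with basis $\{L_n,M_n,Y_{n+\frac12},C_L\mid n\in\mathbb{Z}\}$, $C_L$ central, and nonzero brackets $[L_m,L_n]=(n-m)L_{m+n}+\frac{m^3-m}{12}\delta_{m+n,0}C_L$, $[L_m,M_n]=(n-\lambda m+2\mu)M_{m+n}$, $[L_m,Y_{n+\frac12}]=(n+\frac12-\frac{\lambda+1}{2}m+\mu)Y_{m+n+\frac12}$, $[Y_{m+\frac12},Y_{n+\frac12}]=(n-m)M_{m+n+1}$. It is $\frac12\mathbb{Z}$-graded by $W_0=\langle L_0,M_0,C_L\rangle$, $W_n=\langle L_n,M_n\rangle$ ($n\neq0$), $W_{n+\frac12}=\langle Y_{n+\frac12}\rangle$. A $\frac12$-derivation is a linear map $\varphi$ with $\varphi([x,y])=\frac12([\varphi(x),y]+[x,\varphi(y)])$; it has degree $g$ if $\varphi(W_h)\subseteq W_{g+h}$ for all $h\in\frac12\mathbb{Z}$. *)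

theory Defs
  imports Complex_Main
begin

text \<open>Basis of the Lie algebra: BL n = L_n, BM n = M_n, BY n = Y_(n+1/2), BC = C_L.\<close>
datatype basis = BL int | BM int | BY int | BC

definition carrier :: "(basis \<Rightarrow> complex) set" where
  "carrier = {x. finite {b. x b \<noteq> 0}}"

definition supp :: "(basis \<Rightarrow> complex) \<Rightarrow> basis set" where
  "supp x = {b. x b \<noteq> 0}"

definition ev :: "basis \<Rightarrow> basis \<Rightarrow> complex" where
  "ev b = (\<lambda>c. if c = b then 1 else 0)"

fun brb :: "complex \<Rightarrow> complex \<Rightarrow> basis \<Rightarrow> basis \<Rightarrow> basis \<Rightarrow> complex" where
  "brb lam mu (BL m) (BL n) =
     (\<lambda>c. of_int (n - m) * ev (BL (m + n)) c
          + (if m + n = 0 then (of_int m ^ 3 - of_int m) / 12 else 0) * ev BC c)"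
| "brb lam mu (BL m) (BM n) = (\<lambda>c. (of_int n - lam * of_int m + 2 * mu) * ev (BM (m + n)) c)"
| "brb lam mu (BM n) (BL m) = (\<lambda>c. - (of_int n - lam * of_int m + 2 * mu) * ev (BM (m + n)) c)"
| "brb lam mu (BL m) (BY n) =
     (\<lambda>c. (of_int n + 1/2 - (lam + 1) / 2 * of_int m + mu) * ev (BY (m + n)) c)"
| "brb lam mu (BY n) (BL m) =
     (\<lambda>c. - (of_int n + 1/2 - (lam + 1) / 2 * of_int m + mu) * ev (BY (m + n)) c)"
| "brb lam mu (BY m) (BY n) = (\<lambda>c. of_int (n - m) * ev (BM (m + n + 1)) c)"
| "brb lam mu _ _ = (\<lambda>c. 0)"

definition br :: "complex \<Rightarrow> complex \<Rightarrow> (basis \<Rightarrow> complex) \<Rightarrow> (basis \<Rightarrow> complex) \<Rightarrow> (basis \<Rightarrow> complex)" where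
  "br lam mu x y = (\<lambda>c. \<Sum>a\<in>supp x. \<Sum>b\<in>supp y. x a * y b * brb lam mu a b c)"

text \<open>Doubled degree of a basis element (the grading is by 1/2 Z).\<close>
fun deg2 :: "basis \<Rightarrow> int" where
  "deg2 (BL n) = 2 * n"
| "deg2 (BM n) = 2 * n"
| "deg2 (BY n) = 2 * n + 1"
| "deg2 BC = 0"

text \<open>x lies in W_(k/2).\<close>
definition homog :: "int \<Rightarrow> (basis \<Rightarrow> complex) \<Rightarrow> bool" where
  "homog k x \<longleftrightarrow> x \<in> carrier \<and> (\<forall>b. x b \<noteq> 0 \<longrightarrow> deg2 b = k)"

definition is_linear :: "((basis \<Rightarrow> complex) \<Rightarrow> (basis \<Rightarrow> complex)) \<Rightarrow> bool" where
  "is_linear phi \<longleftrightarrow> (\<forall>x\<in>carrier. phi x \<in> carrier) \<and>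
     (\<forall>x\<in>carrier. \<forall>y\<in>carrier. phi (\<lambda>b. x b + y b) = (\<lambda>b. phi x b + phi y b)) \<and>
     (\<forall>x\<in>carrier. \<forall>c. phi (\<lambda>b. c * x b) = (\<lambda>b. c * phi x b))"

definition half_derivation :: "complex \<Rightarrow> complex \<Rightarrow> ((basis \<Rightarrow> complex) \<Rightarrow> (basis \<Rightarrow> complex)) \<Rightarrow> bool" where
  "half_derivation lam mu phi \<longleftrightarrow> is_linear phi \<and>
     (\<forall>x\<in>carrier. \<forall>y\<in>carrier.
        phi (br lam mu x y) = (\<lambda>c. (br lam mu (phi x) y c + br lam mu x (phi y) c) / 2))"

text \<open>Degree g (given doubled as g2): phi(W_h) \<subseteq> W_(g+h) for all h in 1/2 Z.\<close>
definition has_degree2 :: "int \<Rightarrow> ((basis \<Rightarrow> complex) \<Rightarrow> (basis \<Rightarrow> complex)) \<Rightarrow> bool" where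
  "has_degree2 g2 phi \<longleftrightarrow> (\<forall>k x. homog k x \<longrightarrow> homog (k + g2) (phi x))"

definition Delta :: "complex \<Rightarrow> complex \<Rightarrow> int \<Rightarrow> ((basis \<Rightarrow> complex) \<Rightarrow> (basis \<Rightarrow> complex)) set" where
  "Delta lam mu j = {phi. half_derivation lam mu phi \<and> has_degree2 (2 * j) phi}"

definition phi_ja :: "int \<Rightarrow> complex \<Rightarrow> (basis \<Rightarrow> complex) \<Rightarrow> (basis \<Rightarrow> complex)" where
  "phi_ja j alpha x = (\<lambda>b. case b of BM m \<Rightarrow> alpha * x (BL (m - j)) | _ \<Rightarrow> 0)"

end

(*
  By the grading, a 1/2-derivation phi of degree j maps every basis vector into the span of at
  most three basis vectors, so it is described by a few coefficient sequences, and the identity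
  2 phi [x, y] = [phi x, y] + [x, phi y] on pairs of basis vectors becomes a system of linear
  recurrences for them.  The [L, L]-relations make the L-coefficient of phi L_n a constant c,
  which the Virasoro cocycle forces to vanish unless j = 0, and make the M-coefficient a
  constant alpha, which must vanish unless lam = 1.  The [L, Y]- and [Y, Y]-relations and the
  central parts of the [L, L]-relations then show that phi acts as c on Y, M and C_L.  The
  hypothesis is needed only at an index with n + 1/2 + mu = j, which exists only for
  mu in 1/2 + Z: there the [L_0, Y_(n+1/2)]-relation is void, and the relations with L_1 and
  L_2 determine phi Y_(n+1/2) provided lam is not -1.  Conversely c Id + phi_(j,alpha) is a
  1/2-derivation whenever lam = 1 or alpha = 0.
*)

theory Submission
  imports Defs
begin

lemma ev_same [simp]: "ev b b = 1"
  by (simp add: ev_def)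

lemma ev_other [simp]: "c \<noteq> b \<Longrightarrow> ev b c = 0"
  by (simp add: ev_def)

lemma carrier_ev [simp]: "ev b \<in> carrier"
  by (simp add: carrier_def ev_def)

lemma supp_ev [simp]: "supp (ev b) = {b}"
  by (auto simp: supp_def ev_def)

lemma finite_supp: "x \<in> carrier \<Longrightarrow> finite (supp x)"
  by (simp add: carrier_def supp_def)

lemma carrier_zero [simp]: "(\<lambda>c. 0) \<in> carrier"
  by (simp add: carrier_def)

lemma carrier_add [simp]:
  assumes "x \<in> carrier" and "y \<in> carrier"
  shows "(\<lambda>b. x b + y b) \<in> carrier"
proof -
  have "{b. x b + y b \<noteq> 0} \<subseteq> {b. x b \<noteq> 0} \<union> {b. y b \<noteq> 0}"
    by auto
  with assms show ?thesis
    by (auto simp: carrier_def intro: finite_subset)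
qed

lemma carrier_scale [simp]: "x \<in> carrier \<Longrightarrow> (\<lambda>b. k * x b) \<in> carrier"
  unfolding carrier_def by (auto elim: finite_subset[rotated])

lemma carrier_sum:
  assumes "finite I" and "\<And>i. i \<in> I \<Longrightarrow> u i \<in> carrier"
  shows "(\<lambda>c. \<Sum>i\<in>I. k i * u i c) \<in> carrier"
proof -
  have "{c. (\<Sum>i\<in>I. k i * u i c) \<noteq> 0} \<subseteq> (\<Union>i\<in>I. supp (u i))"
    by (auto simp: supp_def intro: sum.neutral)
  moreover have "finite (\<Union>i\<in>I. supp (u i))"
    using assms finite_supp by blast
  ultimately show ?thesis
    by (auto simp: carrier_def intro: finite_subset)
qed

lemma carrier_expansion: "x \<in> carrier \<Longrightarrow> x = (\<lambda>c. \<Sum>a\<in>supp x. x a * ev a c)"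
proof (rule ext)
  fix c
  assume "x \<in> carrier"
  then have "(\<Sum>a\<in>supp x. x a * ev a c) = (\<Sum>a\<in>supp x. if a = c then x a else 0)"
    by (intro sum.cong) (auto simp: ev_def)
  also have "\<dots> = x c"
    using \<open>x \<in> carrier\<close> by (simp add: sum.delta' finite_supp) (simp add: supp_def)
  finally show "x c = (\<Sum>a\<in>supp x. x a * ev a c)" by simp
qed

lemma is_linear_add: "is_linear f \<Longrightarrow> x \<in> carrier \<Longrightarrow> y \<in> carrier \<Longrightarrow> f (\<lambda>b. x b + y b) = (\<lambda>b. f x b + f y b)"
  by (simp add: is_linear_def)

lemma is_linear_scale: "is_linear f \<Longrightarrow> x \<in> carrier \<Longrightarrow> f (\<lambda>b. k * x b) = (\<lambda>b. k * f x b)"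
  by (simp add: is_linear_def)

lemma is_linear_carrier: "is_linear f \<Longrightarrow> x \<in> carrier \<Longrightarrow> f x \<in> carrier"
  by (simp add: is_linear_def)

lemma is_linear_zero: "is_linear f \<Longrightarrow> f (\<lambda>c. 0) = (\<lambda>c. 0)"
  using is_linear_scale[of f "\<lambda>c. 0" 0] by simp

lemma is_linear_scale_ev: "is_linear f \<Longrightarrow> f (\<lambda>c. k * ev b c) = (\<lambda>c. k * f (ev b) c)"
  by (simp add: is_linear_scale)

lemma is_linear_comb_ev:
  assumes f: "is_linear f"
  shows "f (\<lambda>c. k * ev a c + l * ev b c) = (\<lambda>c. k * f (ev a) c + l * f (ev b) c)"
proof -
  have "f (\<lambda>c. k * ev a c + l * ev b c) = (\<lambda>c. f (\<lambda>c. k * ev a c) c + f (\<lambda>c. l * ev b c) c)"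
    by (rule is_linear_add[OF f]) simp_all
  then show ?thesis
    by (simp add: is_linear_scale_ev[OF f])
qed

lemma is_linear_sum:
  assumes f: "is_linear f" and I: "finite I" and u: "\<And>i. i \<in> I \<Longrightarrow> u i \<in> carrier"
  shows "f (\<lambda>c. \<Sum>i\<in>I. k i * u i c) = (\<lambda>c. \<Sum>i\<in>I. k i * f (u i) c)"
  using I u
proof (induction I rule: finite_induct)
  case empty
  then show ?case by (simp add: is_linear_zero[OF f])
next
  case (insert a I)
  have "f (\<lambda>c. \<Sum>i\<in>insert a I. k i * u i c) = f (\<lambda>c. k a * u a c + (\<Sum>i\<in>I. k i * u i c))"
    using insert.hyps by simp
  also have "\<dots> = (\<lambda>c. f (\<lambda>c. k a * u a c) c + f (\<lambda>c. \<Sum>i\<in>I. k i * u i c) c)"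
    using insert.prems by (intro is_linear_add[OF f]) (simp_all add: carrier_sum insert.hyps)
  also have "\<dots> = (\<lambda>c. \<Sum>i\<in>insert a I. k i * f (u i) c)"
    using insert.prems by (simp add: insert.IH insert.hyps is_linear_scale[OF f])
  finally show ?case .
qed

lemma is_linear_expansion: "is_linear f \<Longrightarrow> x \<in> carrier \<Longrightarrow> f x = (\<lambda>c. \<Sum>a\<in>supp x. x a * f (ev a) c)"
proof -
  assume f: "is_linear f" and x: "x \<in> carrier"
  have "f x = f (\<lambda>c. \<Sum>a\<in>supp x. x a * ev a c)"
    by (rule arg_cong[OF carrier_expansion[OF x]])
  then show ?thesis
    by (simp add: is_linear_sum[OF f finite_supp[OF x]])
qed

lemma is_linear_eq_on_basis:
  assumes "is_linear f" and "is_linear g" and "\<And>b. f (ev b) = g (ev b)" and "x \<in> carrier"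
  shows "f x = g x"
  using assms by (simp add: is_linear_expansion[of f x] is_linear_expansion[of g x])

lemma br_eq_sum:
  assumes "finite S" and "finite T" and "supp x \<subseteq> S" and "supp y \<subseteq> T"
  shows "br lam mu x y c = (\<Sum>a\<in>S. \<Sum>b\<in>T. x a * y b * brb lam mu a b c)"
proof -
  have "br lam mu x y c = (\<Sum>a\<in>supp x. \<Sum>b\<in>T. x a * y b * brb lam mu a b c)"
    unfolding br_def
    by (intro sum.cong refl sum.mono_neutral_left) (use assms in \<open>auto simp: supp_def\<close>)
  also have "\<dots> = (\<Sum>a\<in>S. \<Sum>b\<in>T. x a * y b * brb lam mu a b c)"
    by (intro sum.mono_neutral_left) (use assms in \<open>auto simp: supp_def\<close>)
  finally show ?thesis .
qed

lemma br_ev_ev: "br lam mu (ev a) (ev b) = brb lam mu a b"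
  by (simp add: br_def)

lemma br_ev_right:
  "finite S \<Longrightarrow> supp x \<subseteq> S \<Longrightarrow> br lam mu x (ev b) c = (\<Sum>a\<in>S. x a * brb lam mu a b c)"
  using br_eq_sum[of S "{b}" x "ev b"] by simp

lemma br_ev_left:
  "finite S \<Longrightarrow> supp y \<subseteq> S \<Longrightarrow> br lam mu (ev a) y c = (\<Sum>b\<in>S. y b * brb lam mu a b c)"
  using br_eq_sum[of "{a}" S "ev a" y] by simp

lemma brb_carrier: "brb lam mu a b \<in> carrier"
  by (cases a; cases b) simp_all

lemma br_carrier:
  assumes "x \<in> carrier" and "y \<in> carrier"
  shows "br lam mu x y \<in> carrier"
proof -
  have "br lam mu x y = (\<lambda>c. \<Sum>a\<in>supp x. x a * (\<lambda>c. \<Sum>b\<in>supp y. y b * brb lam mu a b c) c)"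
    by (simp add: br_def sum_distrib_left mult.assoc)
  then show ?thesis
    using assms by (simp add: carrier_sum finite_supp brb_carrier)
qed

lemma is_linear_br_left:
  assumes y: "y \<in> carrier"
  shows "is_linear (\<lambda>x. br lam mu x y)"
  unfolding is_linear_def
proof (intro conjI ballI allI)
  fix x
  assume "x \<in> carrier"
  then show "br lam mu x y \<in> carrier"
    using y by (rule br_carrier)
next
  fix x z
  assume x: "x \<in> carrier" and z: "z \<in> carrier"
  have fin: "finite (supp x \<union> supp z)" "finite (supp y)"
    using x y z by (simp_all add: finite_supp)
  have "supp (\<lambda>b. x b + z b) \<subseteq> supp x \<union> supp z"
    by (auto simp: supp_def)
  then show "br lam mu (\<lambda>b. x b + z b) y = (\<lambda>c. br lam mu x y c + br lam mu z y c)"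
    by (simp add: fun_eq_iff br_eq_sum[OF fin] distrib_right sum.distrib)
next
  fix x k
  assume x: "x \<in> carrier"
  have fin: "finite (supp x)" "finite (supp y)"
    using x y by (simp_all add: finite_supp)
  have "supp (\<lambda>b. k * x b) \<subseteq> supp x"
    by (auto simp: supp_def)
  then show "br lam mu (\<lambda>b. k * x b) y = (\<lambda>c. k * br lam mu x y c)"
    by (simp add: fun_eq_iff br_eq_sum[OF fin] sum_distrib_left mult.assoc)
qed

lemma is_linear_br_right:
  assumes x: "x \<in> carrier"
  shows "is_linear (br lam mu x)"
  unfolding is_linear_def
proof (intro conjI ballI allI)
  fix y
  assume "y \<in> carrier"
  then show "br lam mu x y \<in> carrier"
    by (rule br_carrier[OF x])
next
  fix y z
  assume y: "y \<in> carrier" and z: "z \<in> carrier"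
  have fin: "finite (supp x)" "finite (supp y \<union> supp z)"
    using x y z by (simp_all add: finite_supp)
  have "supp (\<lambda>b. y b + z b) \<subseteq> supp y \<union> supp z"
    by (auto simp: supp_def)
  then show "br lam mu x (\<lambda>b. y b + z b) = (\<lambda>c. br lam mu x y c + br lam mu x z c)"
    by (simp add: fun_eq_iff br_eq_sum[OF fin] distrib_left distrib_right sum.distrib)
next
  fix y k
  assume y: "y \<in> carrier"
  have fin: "finite (supp x)" "finite (supp y)"
    using x y by (simp_all add: finite_supp)
  have "supp (\<lambda>b. k * y b) \<subseteq> supp y"
    by (auto simp: supp_def)
  then show "br lam mu x (\<lambda>b. k * y b) = (\<lambda>c. k * br lam mu x y c)"
    by (simp add: fun_eq_iff br_eq_sum[OF fin] sum_distrib_left ac_simps)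
qed

lemma br_sum_sum:
  assumes I: "finite I" and J: "finite J"
    and u: "\<And>i. i \<in> I \<Longrightarrow> u i \<in> carrier" and v: "\<And>j. j \<in> J \<Longrightarrow> v j \<in> carrier"
  shows "br lam mu (\<lambda>c. \<Sum>i\<in>I. k i * u i c) (\<lambda>c. \<Sum>j\<in>J. l j * v j c) c
       = (\<Sum>i\<in>I. k i * (\<Sum>j\<in>J. l j * br lam mu (u i) (v j) c))"
proof -
  have "br lam mu (\<lambda>c. \<Sum>i\<in>I. k i * u i c) (\<lambda>c. \<Sum>j\<in>J. l j * v j c)
      = (\<lambda>c. \<Sum>i\<in>I. k i * br lam mu (u i) (\<lambda>c. \<Sum>j\<in>J. l j * v j c) c)"
    using is_linear_sum[OF is_linear_br_left[OF carrier_sum[OF J v]] I u] by simp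
  then show ?thesis
    using u by (simp add: is_linear_sum[OF is_linear_br_right J v])
qed

lemma half_derivation_from_basis:
  assumes T: "is_linear T"
    and basis: "\<And>a b c. 2 * T (brb lam mu a b) c
                  = br lam mu (T (ev a)) (ev b) c + br lam mu (ev a) (T (ev b)) c"
  shows "half_derivation lam mu T"
  unfolding half_derivation_def
proof (intro conjI ballI T ext)
  fix x y c
  assume x: "x \<in> carrier" and y: "y \<in> carrier"
  let ?X = "supp x" and ?Y = "supp y"
  have X: "finite ?X" and Y: "finite ?Y"
    using x y by (simp_all add: finite_supp)
  have TX: "T (ev a) \<in> carrier" for a
    using T by (simp add: is_linear_carrier)
  have basis': "T (brb lam mu a b) c = (br lam mu (T (ev a)) (ev b) c + br lam mu (ev a) (T (ev b)) c) / 2" for a b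
    using basis[of a b c] by (simp add: mult.commute)
  have "br lam mu x y = (\<lambda>c. \<Sum>a\<in>?X. x a * (\<lambda>c. \<Sum>b\<in>?Y. y b * brb lam mu a b c) c)"
    by (simp add: br_def sum_distrib_left mult.assoc)
  then have "T (br lam mu x y) c = (\<Sum>a\<in>?X. x a * (\<Sum>b\<in>?Y. y b * T (brb lam mu a b) c))"
    by (simp add: is_linear_sum[OF T X] is_linear_sum[OF T Y] carrier_sum[OF Y] brb_carrier)
  also have "\<dots> = ((\<Sum>a\<in>?X. x a * (\<Sum>b\<in>?Y. y b * br lam mu (T (ev a)) (ev b) c))
                  + (\<Sum>a\<in>?X. x a * (\<Sum>b\<in>?Y. y b * br lam mu (ev a) (T (ev b)) c))) / 2"
    by (simp add: basis' add_divide_distrib sum_divide_distrib[symmetric] sum.distrib ring_distribs)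
  also have "\<dots> = (br lam mu (T x) y c + br lam mu x (T y) c) / 2"
    using br_sum_sum[OF X Y, of "\<lambda>a. T (ev a)" ev lam mu x y c]
      br_sum_sum[OF X Y, of ev "\<lambda>b. T (ev b)" lam mu x y c]
    by (simp add: TX is_linear_expansion[OF T x] is_linear_expansion[OF T y]
        carrier_expansion[OF x, symmetric] carrier_expansion[OF y, symmetric])
  finally show "T (br lam mu x y) c = (br lam mu (T x) y c + br lam mu x (T y) c) / 2" .
qed

lemma Delta_cong:
  assumes eq: "\<And>x. x \<in> carrier \<Longrightarrow> phi x = psi x" and psi: "psi \<in> Delta lam mu j"
  shows "phi \<in> Delta lam mu j"
  using psi
  unfolding Delta_def half_derivation_def is_linear_def has_degree2_def homog_def
  by (simp add: eq br_carrier)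

definition scalar_plus_phi_ja :: "complex \<Rightarrow> int \<Rightarrow> complex \<Rightarrow> (basis \<Rightarrow> complex) \<Rightarrow> basis \<Rightarrow> complex"
  where "scalar_plus_phi_ja k j alpha x = (\<lambda>b. k * x b + phi_ja j alpha x b)"

lemma phi_ja_zero [simp]: "phi_ja j 0 x = (\<lambda>b. 0)"
  by (simp add: fun_eq_iff phi_ja_def split: basis.split)

lemma carrier_phi_ja:
  assumes x: "x \<in> carrier"
  shows "phi_ja j alpha x \<in> carrier"
proof -
  have "{b. phi_ja j alpha x b \<noteq> 0} \<subseteq> (\<lambda>n. BM (n + j)) ` (BL -` supp x)"
    by (force simp: phi_ja_def supp_def split: basis.splits)
  moreover have "finite (BL -` supp x)"
    by (rule finite_vimageI) (simp_all add: finite_supp x inj_def)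
  ultimately show ?thesis
    by (auto simp: carrier_def intro: finite_subset)
qed

lemma is_linear_scalar_plus_phi_ja: "is_linear (scalar_plus_phi_ja k j alpha)"
  unfolding is_linear_def scalar_plus_phi_ja_def
proof (intro conjI ballI allI)
  fix x
  assume "x \<in> carrier"
  then show "(\<lambda>b. k * x b + phi_ja j alpha x b) \<in> carrier"
    by (simp add: carrier_phi_ja)
qed (auto simp: fun_eq_iff phi_ja_def algebra_simps split: basis.split)

lemma scalar_plus_phi_ja_ev:
  "scalar_plus_phi_ja k j alpha (ev a)
     = (\<lambda>c. k * ev a c + (case a of BL n \<Rightarrow> alpha * ev (BM (n + j)) c | _ \<Rightarrow> 0))"
  by (auto simp: fun_eq_iff scalar_plus_phi_ja_def phi_ja_def ev_def split: basis.split)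

lemma br_scalar_plus_phi_ja_ev_left:
  "br lam mu (scalar_plus_phi_ja k j alpha (ev a)) (ev b) c
     = k * brb lam mu a b c + (case a of BL n \<Rightarrow> alpha * brb lam mu (BM (n + j)) b c | _ \<Rightarrow> 0)"
proof (cases a)
  case (BL n)
  have "br lam mu (\<lambda>c. k * ev a c + alpha * ev (BM (n + j)) c) (ev b)
      = (\<lambda>c. k * br lam mu (ev a) (ev b) c + alpha * br lam mu (ev (BM (n + j))) (ev b) c)"
    by (rule is_linear_comb_ev[OF is_linear_br_left[OF carrier_ev]])
  then show ?thesis
    using BL by (simp add: scalar_plus_phi_ja_ev br_ev_ev)
qed (simp_all add: scalar_plus_phi_ja_ev br_ev_ev is_linear_scale_ev[OF is_linear_br_left[OF carrier_ev]])

lemma br_scalar_plus_phi_ja_ev_right: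
  "br lam mu (ev a) (scalar_plus_phi_ja k j alpha (ev b)) c
     = k * brb lam mu a b c + (case b of BL n \<Rightarrow> alpha * brb lam mu a (BM (n + j)) c | _ \<Rightarrow> 0)"
proof (cases b)
  case (BL n)
  have "br lam mu (ev a) (\<lambda>c. k * ev b c + alpha * ev (BM (n + j)) c)
      = (\<lambda>c. k * br lam mu (ev a) (ev b) c + alpha * br lam mu (ev a) (ev (BM (n + j))) c)"
    by (rule is_linear_comb_ev[OF is_linear_br_right[OF carrier_ev]])
  then show ?thesis
    using BL by (simp add: scalar_plus_phi_ja_ev br_ev_ev)
qed (simp_all add: scalar_plus_phi_ja_ev br_ev_ev is_linear_scale_ev[OF is_linear_br_right[OF carrier_ev]])

(* [L_m, M_(n+j)] + [M_(m+j), L_n] = (1 + lam) (n - m) M_(m+n+j), twice the image of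
   [L_m, L_n] only for lam = 1. *)
lemma phi_ja_brb_lam1:
  "2 * phi_ja j alpha (brb 1 mu a b) c
     = (case a of BL n \<Rightarrow> alpha * brb 1 mu (BM (n + j)) b c | _ \<Rightarrow> 0)
     + (case b of BL n \<Rightarrow> alpha * brb 1 mu a (BM (n + j)) c | _ \<Rightarrow> 0)"
  by (cases a; cases b; cases c) (auto simp: phi_ja_def ev_def algebra_simps)

lemma half_derivation_scalar_plus_phi_ja:
  assumes "lam = 1 \<or> alpha = 0"
  shows "half_derivation lam mu (scalar_plus_phi_ja k j alpha)"
proof (rule half_derivation_from_basis[OF is_linear_scalar_plus_phi_ja])
  fix a b c
  show "2 * scalar_plus_phi_ja k j alpha (brb lam mu a b) c
      = br lam mu (scalar_plus_phi_ja k j alpha (ev a)) (ev b) c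
      + br lam mu (ev a) (scalar_plus_phi_ja k j alpha (ev b)) c"
    using assms phi_ja_brb_lam1[of j alpha mu a b c]
    unfolding br_scalar_plus_phi_ja_ev_left br_scalar_plus_phi_ja_ev_right
    by (cases a; cases b) (auto simp: scalar_plus_phi_ja_def algebra_simps)
qed

lemma has_degree2_scalar_plus_phi_ja:
  "has_degree2 (2 * j) (scalar_plus_phi_ja (if j = 0 then k else 0) j alpha)"
  unfolding has_degree2_def
proof (intro allI impI)
  fix d x
  assume "homog d x"
  then have x: "x \<in> carrier" and deg: "\<And>b. x b \<noteq> 0 \<Longrightarrow> deg2 b = d"
    by (auto simp: homog_def)
  have "deg2 b = d + 2 * j" if nz: "scalar_plus_phi_ja (if j = 0 then k else 0) j alpha x b \<noteq> 0" for b
  proof (cases b)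
    case (BM m)
    then have "(j = 0 \<and> x b \<noteq> 0) \<or> x (BL (m - j)) \<noteq> 0"
      using nz by (auto simp: scalar_plus_phi_ja_def phi_ja_def split: if_splits)
    then show ?thesis
      using BM deg[of b] deg[of "BL (m - j)"] by auto
  qed (use nz in \<open>auto simp: scalar_plus_phi_ja_def phi_ja_def split: if_splits dest: deg\<close>)
  with x show "homog (d + 2 * j) (scalar_plus_phi_ja (if j = 0 then k else 0) j alpha x)"
    by (auto simp: homog_def is_linear_carrier[OF is_linear_scalar_plus_phi_ja])
qed

lemma scalar_plus_phi_ja_in_Delta:
  "lam = 1 \<or> alpha = 0 \<Longrightarrow> scalar_plus_phi_ja (if j = 0 then k else 0) j alpha \<in> Delta lam mu j"
  by (simp add: Delta_def half_derivation_scalar_plus_phi_ja has_degree2_scalar_plus_phi_ja)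

lemma deg2_even: "deg2 c = 2 * k \<Longrightarrow> c \<in> {BL k, BM k, BC}"
  by (cases c) (simp_all, presburger)

lemma deg2_odd: "deg2 c = 2 * k + 1 \<Longrightarrow> c = BY k"
  by (cases c) (simp_all, presburger+)

lemma exists_split_index: "\<exists>m n. m \<noteq> n \<and> k = m + n + (1::int)"
  by presburger

definition cocycle :: "int \<Rightarrow> complex"
  where "cocycle m = (of_int m ^ 3 - of_int m) / 12"

locale graded_half_derivation =
  fixes lam mu :: complex and j :: int and phi :: "(basis \<Rightarrow> complex) \<Rightarrow> basis \<Rightarrow> complex"
  assumes is_half_derivation: "half_derivation lam mu phi"
    and has_degree: "has_degree2 (2 * j) phi"
begin

lemma is_linear_phi: "is_linear phi"
  using is_half_derivation by (simp add: half_derivation_def)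

lemma basis_identity:
  "2 * phi (brb lam mu a b) c = br lam mu (phi (ev a)) (ev b) c + br lam mu (ev a) (phi (ev b)) c"
proof -
  have "phi (br lam mu (ev a) (ev b))
      = (\<lambda>c. (br lam mu (phi (ev a)) (ev b) c + br lam mu (ev a) (phi (ev b)) c) / 2)"
    using is_half_derivation by (simp add: half_derivation_def)
  then show ?thesis
    by (simp add: br_ev_ev fun_eq_iff field_simps)
qed

lemma deg2_phi_ev: "phi (ev a) c \<noteq> 0 \<Longrightarrow> deg2 c = deg2 a + 2 * j"
proof -
  have "homog (deg2 a) (ev a)"
    unfolding homog_def by (metis carrier_ev ev_other)
  then have "homog (deg2 a + 2 * j) (phi (ev a))"
    using has_degree by (simp add: has_degree2_def)
  then show "phi (ev a) c \<noteq> 0 \<Longrightarrow> deg2 c = deg2 a + 2 * j"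
    by (simp add: homog_def)
qed

lemma supp_phi_L: "supp (phi (ev (BL n))) \<subseteq> {BL (n + j), BM (n + j), BC}"
  using deg2_phi_ev[of "BL n"] deg2_even[of _ "n + j"] by (auto simp: supp_def algebra_simps)

lemma supp_phi_M: "supp (phi (ev (BM n))) \<subseteq> {BL (n + j), BM (n + j), BC}"
  using deg2_phi_ev[of "BM n"] deg2_even[of _ "n + j"] by (auto simp: supp_def algebra_simps)

lemma supp_phi_C: "supp (phi (ev BC)) \<subseteq> {BL j, BM j, BC}"
  using deg2_phi_ev[of BC] deg2_even[of _ j] by (auto simp: supp_def)

lemma supp_phi_Y: "supp (phi (ev (BY n))) \<subseteq> {BY (n + j)}"
  using deg2_phi_ev[of "BY n"] deg2_odd[of _ "n + j"] by (auto simp: supp_def algebra_simps)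

lemmas br_phi_ev =
  br_ev_right[OF _ supp_phi_L] br_ev_right[OF _ supp_phi_M]
  br_ev_right[OF _ supp_phi_C] br_ev_right[OF _ supp_phi_Y]
  br_ev_left[OF _ supp_phi_L] br_ev_left[OF _ supp_phi_M]
  br_ev_left[OF _ supp_phi_C] br_ev_left[OF _ supp_phi_Y]

lemmas expand_basis_identity =
  brb.simps is_linear_comb_ev[OF is_linear_phi] is_linear_scale_ev[OF is_linear_phi] is_linear_zero[OF is_linear_phi]
  br_phi_ev finite.intros

abbreviation "A n \<equiv> phi (ev (BL n)) (BL (n + j))"
abbreviation "B n \<equiv> phi (ev (BL n)) (BM (n + j))"
abbreviation "E n \<equiv> phi (ev (BL n)) BC"
abbreviation "P n \<equiv> phi (ev (BM n)) (BL (n + j))"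
abbreviation "Q n \<equiv> phi (ev (BM n)) (BM (n + j))"
abbreviation "F n \<equiv> phi (ev (BM n)) BC"
abbreviation "Yv n \<equiv> phi (ev (BY n)) (BY (n + j))"
abbreviation "CL \<equiv> phi (ev BC) (BL j)"
abbreviation "CM \<equiv> phi (ev BC) (BM j)"
abbreviation "CC \<equiv> phi (ev BC) BC"

(* XY_Z_component: the Z-coefficient of basis_identity for the pair (X_m, Y_n). *)
lemma LL_L_component:
  "2 * (of_int (n - m) * A (m + n) + (if m + n = 0 then cocycle m * CL else 0))
     = A m * of_int (n - m - j) + A n * of_int (n + j - m)"
  using basis_identity[of "BL m" "BL n" "BL (m + n + j)"]
  by (simp only: expand_basis_identity)
    (auto simp: ev_def algebra_simps cocycle_def split: if_splits)

lemma LL_M_component: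
  "2 * (of_int (n - m) * B (m + n) + (if m + n = 0 then cocycle m * CM else 0))
     = - B m * (of_int (m + j) - lam * of_int n + 2 * mu) + B n * (of_int (n + j) - lam * of_int m + 2 * mu)"
  using basis_identity[of "BL m" "BL n" "BM (m + n + j)"]
  by (simp only: expand_basis_identity)
    (auto simp: ev_def algebra_simps cocycle_def split: if_splits)

lemma LL_C_component:
  "2 * (of_int (n - m) * E (m + n) + (if m + n = 0 then cocycle m * CC else 0))
     = A m * (if m + n + j = 0 then cocycle (m + j) else 0) + A n * (if m + n + j = 0 then cocycle m else 0)"
  using basis_identity[of "BL m" "BL n" BC]
  by (simp only: expand_basis_identity)
    (auto simp: ev_def algebra_simps cocycle_def split: if_splits)

lemma LY_Y_component:
  "2 * (2 * of_int n + 1 - (lam + 1) * of_int m + 2 * mu) * Yv (m + n)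
     = A m * (2 * of_int n + 1 - (lam + 1) * of_int (m + j) + 2 * mu)
     + Yv n * (2 * of_int (n + j) + 1 - (lam + 1) * of_int m + 2 * mu)"
  using basis_identity[of "BL m" "BY n" "BY (m + n + j)"]
  by (simp only: expand_basis_identity)
    (auto simp: ev_def field_simps split: if_splits, algebra)

lemma YY_L_component: "of_int (n - m) * P (m + n + 1) = 0"
  using basis_identity[of "BY m" "BY n" "BL (m + n + 1 + j)"]
  by (simp only: expand_basis_identity)
    (auto simp: ev_def algebra_simps split: if_splits)

lemma YY_M_component:
  "2 * of_int (n - m) * Q (m + n + 1) = Yv m * of_int (n - m - j) + Yv n * of_int (n + j - m)"
  using basis_identity[of "BY m" "BY n" "BM (m + n + 1 + j)"]
  by (simp only: expand_basis_identity)
    (auto simp: ev_def algebra_simps split: if_splits)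

lemma YY_C_component: "of_int (n - m) * F (m + n + 1) = 0"
  using basis_identity[of "BY m" "BY n" BC]
  by (simp only: expand_basis_identity)
    (auto simp: ev_def algebra_simps split: if_splits)

lemma cocycle_values [simp]:
  "cocycle 0 = 0" "cocycle 1 = 0" "cocycle (-1) = 0" "cocycle 2 = 1/2" "cocycle (-2) = -1/2"
  by (simp_all add: cocycle_def)

lemma cocycle_uminus [simp]: "cocycle (- m) = - cocycle m"
  by (simp add: cocycle_def field_simps)

definition scalar :: complex
  where "scalar = (if j = 0 then A 0 else 0)"

lemma A_const: "A n = A 0"
proof -
  have A_off: "A n = A 0" if "n \<noteq> j" for n
  proof -
    have "(of_int n - of_int j) * (A n - A 0) = 0"
      using LL_L_component[where m = 0 and n = n] by (simp add: algebra_simps cong: if_cong)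
    with that show ?thesis by simp
  qed
  show ?thesis
  proof (cases "n = j \<and> j \<noteq> 0")
    case True
    have "of_int j * (A j - A 0) = 0"
      using LL_L_component[where m = j and n = "3 * j"] A_off[of "4 * j"] A_off[of "3 * j"] True
      by (simp add: algebra_simps)
    with True show ?thesis by simp
  next
    case False
    with A_off show ?thesis by (cases "n = j") auto
  qed
qed

lemma E_minus_j: "j \<noteq> 0 \<Longrightarrow> -2 * of_int j * E (-j) = A 0 * cocycle j"
  using LL_C_component[where m = "-j" and n = 0] A_const[of "-j"] by (simp add: algebra_simps)

lemma A_0_eq_0: "j \<noteq> 0 \<Longrightarrow> A 0 = 0"
proof -
  assume j: "j \<noteq> 0"
  note e1 = E_minus_j[OF j]
  have e2: "-10 * of_int j * E (-j) = A 0 * (cocycle (3 * j) + cocycle (2 * j))"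
    using LL_C_component[where m = "-3 * j" and n = "2 * j"] A_const[of "2 * j"] A_const[of "-3 * j"] j
    by (simp add: algebra_simps eq_neg_iff_add_eq_0 neg_eq_iff_add_eq_0)
  have "cocycle (3 * j) + cocycle (2 * j) - 5 * cocycle j = 5/2 * of_int j ^ 3"
    by (simp add: cocycle_def field_simps power3_eq_cube)
  moreover have "A 0 * (cocycle (3 * j) + cocycle (2 * j) - 5 * cocycle j) = 0"
    using e1 e2 by algebra
  ultimately have "A 0 * (5/2 * of_int j ^ 3) = 0"
    by metis
  then show "A 0 = 0"
    using j by simp
qed

lemma A_eq: "A n = scalar"
  using A_const A_0_eq_0 by (simp add: scalar_def)

lemma E_eq_0: "E n = 0"
proof (cases "n + j = 0")
  case False
  then show ?thesis
    using deg2_phi_ev[of "BL n" BC] by auto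
next
  case True
  show ?thesis
  proof (cases "j = 0")
    case False
    have "n = -j"
      using True by simp
    then show ?thesis
      using E_minus_j[OF False] A_0_eq_0[OF False] False by simp
  next
    case j: True
    have "4 * E 0 = 0"
      using LL_C_component[where m = 1 and n = "-1"] j by simp
    with True j show ?thesis by simp
  qed
qed

lemma CC_eq: "CC = scalar"
proof (cases "j = 0")
  case False
  then show ?thesis
    using deg2_phi_ev[of BC BC] by (auto simp: scalar_def)
next
  case True
  then show ?thesis
    unfolding scalar_def
    using LL_C_component[where m = 2 and n = "-2"] A_const[of "-2"] A_const[of 2] E_eq_0[of 0]
    by (simp add: algebra_simps)
qed

lemma CL_eq_0: "CL = 0"
  using LL_L_component[where m = 2 and n = "-2"] A_eq[of "-2"] A_eq[of 2] A_eq[of 0]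
  by (simp add: algebra_simps)

lemma P_eq_0: "P k = 0"
proof -
  obtain m n where "m \<noteq> n" and "k = m + n + 1"
    using exists_split_index by blast
  then show ?thesis
    using YY_L_component[where m = m and n = n] by simp
qed

lemma F_eq_0: "F k = 0"
proof -
  obtain m n where "m \<noteq> n" and "k = m + n + 1"
    using exists_split_index by blast
  then show ?thesis
    using YY_C_component[where m = m and n = n] by simp
qed

lemma scalar_mult_j: "scalar * of_int j = 0"
  by (simp add: scalar_def)

lemma Yv_off_resonance: "(2 * of_int n + 1 + 2 * mu - 2 * of_int j) * (Yv n - scalar) = 0"
proof -
  have "2 * (2 * of_int n + 1 + 2 * mu) * Yv n
      = scalar * (2 * of_int n + 1 - (lam + 1) * of_int j + 2 * mu)
      + Yv n * (2 * of_int n + 2 * of_int j + 1 + 2 * mu)"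
    using LY_Y_component[where m = 0 and n = n] A_eq[of 0] by simp
  then show ?thesis
    using scalar_mult_j by algebra
qed

lemma Yv_resonance:
  assumes res: "2 * of_int n + 1 + 2 * mu = 2 * of_int j" and t: "t \<noteq> 0"
  shows "(Yv n - scalar) * (4 * of_int j - (lam + 1) * of_int t) = 0"
proof -
  have shift: "2 * of_int (t + n) + 1 + 2 * mu - 2 * of_int j = 2 * of_int t"
    using res by simp algebra
  have "Yv (t + n) = scalar"
    using Yv_off_resonance[of "t + n", unfolded shift] t by simp
  then have "2 * (2 * of_int n + 1 - (lam + 1) * of_int t + 2 * mu) * scalar
      = scalar * (2 * of_int n + 1 - (lam + 1) * (of_int t + of_int j) + 2 * mu)
      + Yv n * (2 * of_int n + 2 * of_int j + 1 - (lam + 1) * of_int t + 2 * mu)"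
    using LY_Y_component[where m = t and n = n] A_eq[of t] by simp
  then show ?thesis
    using res scalar_mult_j by algebra
qed

lemma Yv_eq:
  assumes half_int: "(\<exists>k::int. mu = of_int k + 1/2) \<longrightarrow> lam \<noteq> -1"
  shows "Yv n = scalar"
proof (cases "2 * of_int n + 1 + 2 * mu = 2 * of_int j")
  case False
  then show ?thesis
    using Yv_off_resonance[of n] by simp
next
  case True
  then have "mu = of_int (j - n - 1) + 1/2"
    by (simp add: field_simps)
  with half_int have lam: "lam \<noteq> -1"
    by blast
  show ?thesis
  proof (rule ccontr)
    assume "Yv n \<noteq> scalar"
    then have "4 * of_int j - (lam + 1) = 0" and "4 * of_int j - (lam + 1) * 2 = 0"
      using Yv_resonance[OF True, of 1] Yv_resonance[OF True, of 2] by auto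
    then have "lam + 1 = 0"
      by algebra
    with lam show False
      by (simp add: add_eq_0_iff2)
  qed
qed

lemma Q_eq:
  assumes half_int: "(\<exists>k::int. mu = of_int k + 1/2) \<longrightarrow> lam \<noteq> -1"
  shows "Q k = scalar"
proof -
  obtain m n where "m \<noteq> n" and "k = m + n + 1"
    using exists_split_index by blast
  moreover have "of_int (n - m) * (Q (m + n + 1) - scalar) = 0"
    using YY_M_component[where m = m and n = n] Yv_eq[OF half_int, of m] Yv_eq[OF half_int, of n]
    by (simp add: algebra_simps) algebra
  ultimately show ?thesis
    by simp
qed

lemma B_from_B_0: "(of_int n - (of_int j + 2 * mu)) * B n = B 0 * (lam * of_int n - (of_int j + 2 * mu))"
  using LL_M_component[where m = 0 and n = n] by (simp add: algebra_simps cong: if_cong)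

(* Multiply the [L_m, L_n]-relation by (n - s) (m - s) (m + n - s), where s = j + 2 mu, and
   eliminate B m, B n and B (m + n) by B_from_B_0. *)
lemma B_0_times_factor_eq_0:
  assumes "m + n \<noteq> 0"
  shows "B 0 * (of_int m * of_int n * (of_int n - of_int m) * (lam - 1)
           * ((of_int j + 2 * mu) * (lam + 2) - (of_int m + of_int n) * lam)) = 0"
proof -
  have "2 * (of_int n - of_int m) * B (m + n)
      = B n * (of_int n + of_int j + 2 * mu - lam * of_int m)
      - B m * (of_int m + of_int j + 2 * mu - lam * of_int n)"
    using LL_M_component[where m = m and n = n] assms by (simp add: algebra_simps)
  then show ?thesis
    using B_from_B_0[of m] B_from_B_0[of n] B_from_B_0[of "m + n", unfolded of_int_add] by algebra
qed

lemma B_0_eq_0: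
  assumes lam: "lam \<noteq> 1"
  shows "B 0 = 0"
proof (rule ccontr)
  assume B0: "B 0 \<noteq> 0"
  have "(of_int j + 2 * mu) * (lam + 2) - 3 * lam = 0"
    and "(of_int j + 2 * mu) * (lam + 2) - 4 * lam = 0"
    using B_0_times_factor_eq_0[of 1 2] B_0_times_factor_eq_0[of 1 3] lam B0 by auto
  then have lam0: "lam = 0" and s0: "of_int j + 2 * mu = 0"
    by algebra+
  have "B 1 = 0" and "B (-1) = 0"
    using B_from_B_0[of 1] B_from_B_0[of "-1"] lam0 s0 by simp_all
  then have "4 * B 0 = 0"
    using LL_M_component[where m = "-1" and n = 1] by simp
  with B0 show False
    by simp
qed

lemma B_eq_0:
  assumes lam: "lam \<noteq> 1"
  shows "B n = 0"
proof -
  have off: "B k = 0" if "of_int k \<noteq> of_int j + 2 * mu" for k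
    using B_from_B_0[of k] B_0_eq_0[OF lam] that by simp
  show ?thesis
  proof (cases "of_int n = of_int j + 2 * mu \<and> n \<noteq> 0")
    case True
    then have s: "of_int j + 2 * mu = of_int n" and "n \<noteq> 0"
      by simp_all
    have "B (3 * n) = 0" and "B (2 * n) = 0"
      using off[of "3 * n"] off[of "2 * n"] True unfolding s by auto
    then have "B n * (of_int n * (2 - 2 * lam)) = 0"
      using LL_M_component[where m = "2 * n" and n = n] True by (simp add: algebra_simps)
    with lam \<open>n \<noteq> 0\<close> show ?thesis
      by simp
  next
    case False
    then show ?thesis
      using off B_0_eq_0[OF lam] by auto
  qed
qed

lemma B_eq_B_0:
  assumes lam: "lam = 1"
  shows "B n = B 0"
proof -
  have off: "B k = B 0" if "of_int k \<noteq> of_int j + 2 * mu" for k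
  proof -
    have "(of_int k - (of_int j + 2 * mu)) * (B k - B 0) = 0"
      using B_from_B_0[of k] lam by (simp add: algebra_simps)
    with that show ?thesis
      by simp
  qed
  show ?thesis
  proof (cases "of_int n = of_int j + 2 * mu \<and> n \<noteq> 0")
    case True
    then have s: "of_int j + 2 * mu = of_int n" and "n \<noteq> 0"
      by simp_all
    have "B (4 * n) = B 0" and "B (3 * n) = B 0"
      using off[of "4 * n"] off[of "3 * n"] True unfolding s by auto
    then have "of_int n * (B n - B 0) = 0"
      using LL_M_component[where m = "3 * n" and n = n] True lam by (simp add: algebra_simps)
    with \<open>n \<noteq> 0\<close> show ?thesis
      by simp
  next
    case False
    then show ?thesis
      using off by auto
  qed
qed

definition alpha :: complex
  where "alpha = (if lam = 1 then B 0 else 0)"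

lemma B_eq: "B n = alpha"
  using B_eq_B_0 B_eq_0 by (simp add: alpha_def)

lemma CM_eq_0: "CM = 0"
proof -
  have "2 * (4 * alpha + cocycle (-2) * CM) = alpha * (4 + 4 * lam)"
    using LL_M_component[where m = "-2" and n = 2] B_eq[of "-2"] B_eq[of 0] B_eq[of 2]
    by (simp add: algebra_simps)
  then show ?thesis
    by (cases "lam = 1") (simp_all add: alpha_def)
qed

lemma phi_ev_eq:
  assumes half_int: "(\<exists>k::int. mu = of_int k + 1/2) \<longrightarrow> lam \<noteq> -1"
  shows "phi (ev b) = scalar_plus_phi_ja scalar j alpha (ev b)"
proof
  fix c
  have outside: "phi (ev a) c = 0" if "supp (phi (ev a)) \<subseteq> S" and "c \<notin> S" for a S
    using that by (auto simp: supp_def)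
  have scalar: "j \<noteq> 0 \<Longrightarrow> scalar = 0"
    by (simp add: scalar_def)
  have "phi (ev b) c = scalar * ev b c + (case b of BL n \<Rightarrow> alpha * ev (BM (n + j)) c | _ \<Rightarrow> 0)"
  proof (cases b)
    case (BL n)
    then show ?thesis
      using outside[OF supp_phi_L, of n] A_eq[of n] B_eq[of n] E_eq_0[of n] scalar
      by (cases "j = 0") (auto simp: ev_def)
  next
    case (BM n)
    then show ?thesis
      using outside[OF supp_phi_M, of n] P_eq_0[of n] Q_eq[OF half_int, of n] F_eq_0[of n] scalar
      by (cases "j = 0") (auto simp: ev_def)
  next
    case (BY n)
    then show ?thesis
      using outside[OF supp_phi_Y, of n] Yv_eq[OF half_int, of n] scalar
      by (cases "j = 0") (auto simp: ev_def)
  next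
    case BC
    then show ?thesis
      using outside[OF supp_phi_C] CL_eq_0 CM_eq_0 CC_eq scalar
      by (cases "j = 0") (auto simp: ev_def)
  qed
  then show "phi (ev b) c = scalar_plus_phi_ja scalar j alpha (ev b) c"
    by (simp add: scalar_plus_phi_ja_ev)
qed

lemma exists_scalar_plus_phi_ja:
  assumes "(\<exists>k::int. mu = of_int k + 1/2) \<longrightarrow> lam \<noteq> -1"
  shows "\<exists>c alpha. (lam = 1 \<or> alpha = 0) \<and>
           (\<forall>x\<in>carrier. phi x = scalar_plus_phi_ja (if j = 0 then c else 0) j alpha x)"
proof -
  have "\<forall>x\<in>carrier. phi x = scalar_plus_phi_ja scalar j alpha x"
    using is_linear_eq_on_basis[OF is_linear_phi is_linear_scalar_plus_phi_ja phi_ev_eq[OF assms]] by blast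
  moreover have "lam = 1 \<or> alpha = 0"
    by (simp add: alpha_def)
  ultimately show ?thesis
    unfolding scalar_def by blast
qed

end

theorem mem_Delta_iff:
  assumes half_int: "(\<exists>k::int. mu = of_int k + 1/2) \<longrightarrow> lam \<noteq> -1"
  shows "phi \<in> Delta lam mu j \<longleftrightarrow>
    (\<exists>c alpha. (lam = 1 \<or> alpha = 0) \<and>
       (\<forall>x\<in>carrier. phi x = scalar_plus_phi_ja (if j = 0 then c else 0) j alpha x))"
proof
  assume "phi \<in> Delta lam mu j"
  then interpret graded_half_derivation lam mu j phi
    by unfold_locales (simp_all add: Delta_def)
  show "\<exists>c alpha. (lam = 1 \<or> alpha = 0) \<and>
      (\<forall>x\<in>carrier. phi x = scalar_plus_phi_ja (if j = 0 then c else 0) j alpha x)"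
    by (rule exists_scalar_plus_phi_ja[OF half_int])
next
  assume "\<exists>c alpha. (lam = 1 \<or> alpha = 0) \<and>
      (\<forall>x\<in>carrier. phi x = scalar_plus_phi_ja (if j = 0 then c else 0) j alpha x)"
  then show "phi \<in> Delta lam mu j"
    using Delta_cong scalar_plus_phi_ja_in_Delta by blast
qed

lemma half_int_of_cond:
  fixes lam mu :: complex
  assumes "(\<not> (\<exists>k::int. 2 * mu = of_int k))
    \<or> ((\<exists>k::int. mu = of_int k + 1/2) \<and> lam \<notin> {-3, -1, 1})
    \<or> ((\<exists>k::int. mu = of_int k) \<and> lam \<noteq> -1)"
  shows "(\<exists>k::int. mu = of_int k + 1/2) \<longrightarrow> lam \<noteq> -1"
proof
  assume "\<exists>k::int. mu = of_int k + 1/2"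
  then obtain k :: int where k: "mu = of_int k + 1/2"
    by blast
  then have "\<exists>l::int. 2 * mu = of_int l"
    by (intro exI[of _ "2 * k + 1"]) simp
  moreover have "\<not> (\<exists>l::int. mu = of_int l)"
  proof
    assume "\<exists>l::int. mu = of_int l"
    then obtain l :: int where "mu = of_int l"
      by blast
    with k have "of_int (2 * l) = (of_int (2 * k + 1) :: complex)"
      by (simp add: field_simps)
    then have "2 * l = 2 * k + 1"
      by (simp only: of_int_eq_iff)
    then show False
      by presburger
  qed
  ultimately show "lam \<noteq> -1"
    using assms by blast
qed

theorem mainTheorem5:
  fixes lam mu :: complex and j :: int
  assumes cond: "(\<not> (\<exists>k::int. 2 * mu = of_int k))
              \<or> ((\<exists>k::int. mu = of_int k + 1/2) \<and> lam \<notin> {-3, -1, 1})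
              \<or> ((\<exists>k::int. mu = of_int k) \<and> lam \<noteq> -1)"
  shows "(lam \<noteq> 1 \<longrightarrow>
            (\<forall>phi. phi \<in> Delta lam mu j \<longleftrightarrow>
               (\<exists>c. \<forall>x\<in>carrier. phi x = (\<lambda>b. (if j = 0 then c else 0) * x b))))
       \<and> (lam = 1 \<longrightarrow>
            (\<forall>phi. phi \<in> Delta lam mu j \<longleftrightarrow>
               (\<exists>c alpha. \<forall>x\<in>carrier.
                  phi x = (\<lambda>b. (if j = 0 then c else 0) * x b + phi_ja j alpha x b))))"
proof -
  note iff = mem_Delta_iff[OF half_int_of_cond[OF cond], unfolded scalar_plus_phi_ja_def]
  show ?thesis
  proof (intro conjI impI allI)
    fix phi :: "(basis \<Rightarrow> complex) \<Rightarrow> basis \<Rightarrow> complex"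
    assume "lam \<noteq> 1"
    then show "phi \<in> Delta lam mu j \<longleftrightarrow>
        (\<exists>c. \<forall>x\<in>carrier. phi x = (\<lambda>b. (if j = 0 then c else 0) * x b))"
      unfolding iff by simp
  next
    fix phi :: "(basis \<Rightarrow> complex) \<Rightarrow> basis \<Rightarrow> complex"
    assume "lam = 1"
    then show "phi \<in> Delta lam mu j \<longleftrightarrow>
        (\<exists>c alpha. \<forall>x\<in>carrier. phi x = (\<lambda>b. (if j = 0 then c else 0) * x b + phi_ja j alpha x b))"
      unfolding iff by simp
  qed
qed

end
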